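(* Let $\mathcal{A}$ be an associative algebra over a commutative unital ring containing $\mathbb{Q}$, and let $D_1,D_2$ be derivations of $\mathcal{A}$ with $D_1D_2-D_2D_1=D_1$. For $n\ge 0$ let $[D_2]_n=D_2(D_2-1)(D_2-2)\cdots(D_2-n+1)$ (with $[D_2]_0=\mathrm{id}_{\mathcal{A}}$, and integers meaning integer multiples of $\mathrm{id}_{\mathcal{A}}$). Then the multiplication on $\mathcal{A}[[\hbar]]$ given for $a,b\in\mathcal{A}$ by $$a\star b=\sum_{n=0}^{\infty}\frac{\hbar^n}{n!}\,D_1^n(a)\,[D_2]_n(b)$$ is associative; thus $D_1\smile D_2$ is an integrable infinitesimal deformation of $\mathcal{A}$ with this integral.
   Context: $(f\smile g)(a,b)=f(a)g(b)$ for linear maps $f,g:\mathcal{A}\to\mathcal{A}$. *)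

theory Defs
  imports Main "HOL.Modules"
begin

text \<open>An associative algebra A (type 'a, class ring: associative, distributive,
 not necessarily unital) over a commutative unital ring R (type 'r) via the
 scalar action scale.\<close>
definition assoc_algebra :: "('r::comm_ring_1 \<Rightarrow> 'a::ring \<Rightarrow> 'a) \<Rightarrow> bool" where
  "assoc_algebra scale \<longleftrightarrow> module scale \<and>
     (\<forall>r a b. scale r (a * b) = scale r a * b \<and> scale r (a * b) = a * scale r b)"

text \<open>R contains Q: every positive integer is invertible in R.\<close>
definition contains_rationals :: "'r::comm_ring_1 itself \<Rightarrow> bool" where
  "contains_rationals _ \<longleftrightarrow> (\<forall>n::nat. n > 0 \<longrightarrow> (\<exists>s::'r. of_nat n * s = 1))"

definition ring_inv :: "'r::comm_ring_1 \<Rightarrow> 'r" where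
  "ring_inv r = (THE s. r * s = 1)"

definition derivation :: "('r::comm_ring_1 \<Rightarrow> 'a::ring \<Rightarrow> 'a) \<Rightarrow> ('a \<Rightarrow> 'a) \<Rightarrow> bool" where
  "derivation scale D \<longleftrightarrow>
     (\<forall>a b. D (a + b) = D a + D b) \<and> (\<forall>r a. D (scale r a) = scale r (D a)) \<and>
     (\<forall>a b. D (a * b) = D a * b + a * D b)"

fun falling_op :: "('r::comm_ring_1 \<Rightarrow> 'a::ring \<Rightarrow> 'a) \<Rightarrow> ('a \<Rightarrow> 'a) \<Rightarrow> nat \<Rightarrow> 'a \<Rightarrow> 'a" where
  "falling_op scale D 0 = id"
| "falling_op scale D (Suc n) = falling_op scale D n \<circ> (\<lambda>a. D a - scale (of_nat n) a)"

text \<open>Elements of A[[h]] are coefficient sequences nat \<Rightarrow> 'a. The product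
 a \<star> b = \<Sum>_k h^k/k! D1^k(a) [D2]_k(b) on A, extended R[[h]]-bilinearly:
 (f \<star> g)_n = \<Sum>_{k+i+j=n} (1/k!) D1^k(f_i) [D2]_k(g_j).\<close>
definition star_prod :: "('r::comm_ring_1 \<Rightarrow> 'a::ring \<Rightarrow> 'a) \<Rightarrow> ('a \<Rightarrow> 'a) \<Rightarrow> ('a \<Rightarrow> 'a)
    \<Rightarrow> (nat \<Rightarrow> 'a) \<Rightarrow> (nat \<Rightarrow> 'a) \<Rightarrow> (nat \<Rightarrow> 'a)" where
  "star_prod scale D1 D2 f g = (\<lambda>n. \<Sum>k\<le>n. \<Sum>i\<le>n - k.
      scale (ring_inv (of_nat (fact k))) ((D1 ^^ k) (f i) * falling_op scale D2 k (g (n - k - i))))"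

end

theory Submission
  imports Defs
begin

text \<open>Write \<open>(D\<^sub>2 + s choose n)\<close> for \<open>[D\<^sub>2 + s]\<^sub>n / n!\<close>, so that
  \<open>a \<star> b = \<Sum>\<^sub>k \<hbar>\<^sup>k D\<^sub>1\<^sup>k(a) (D\<^sub>2 choose k)(b)\<close>. The relation \<open>[D\<^sub>1, D\<^sub>2] = D\<^sub>1\<close> gives
  \<open>D\<^sub>1 (D\<^sub>2 + s choose n) = (D\<^sub>2 + s + 1 choose n) D\<^sub>1\<close>, and since \<open>D\<^sub>2\<close> is a derivation the
  binomial operators obey the Vandermonde rule
  \<open>(D\<^sub>2 + s + t choose k)(x y) = \<Sum>\<^sub>j (D\<^sub>2 + s choose j)(x) (D\<^sub>2 + t choose k - j)(y)\<close>.
  Expanding \<open>(a \<star> b) \<star> c\<close> with the Leibniz rule for \<open>D\<^sub>1\<^sup>k\<close> and \<open>a \<star> (b \<star> c)\<close> with the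
  Vandermonde rule, and using \<open>(m + j choose j) (D\<^sub>2 choose m + j) = (D\<^sub>2 - m choose j) (D\<^sub>2 choose m)\<close>,
  both become the same triple sum of the terms
  \<open>D\<^sub>1\<^sup>j\<^sup>+\<^sup>l(a) (D\<^sub>2 + m choose l)(D\<^sub>1\<^sup>m b) (D\<^sub>2 - m choose j)(D\<^sub>2 choose m)(c)\<close>.
  Associativity on \<open>A[[\<hbar>]]\<close> follows degree by degree by biadditivity.\<close>

section \<open>Series products from a family of biadditive maps\<close>

definition series_const :: "'a::zero \<Rightarrow> nat \<Rightarrow> 'a" where
  "series_const a n = (if n = 0 then a else 0)"

definition series_shift :: "(nat \<Rightarrow> 'a::zero) \<Rightarrow> nat \<Rightarrow> 'a" where
  "series_shift f n = (if n = 0 then 0 else f (n - 1))"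

lemma series_const_plus_shift:
  fixes f :: "nat \<Rightarrow> 'a::monoid_add"
  shows "f = (\<lambda>n. series_const (f 0) n + series_shift (\<lambda>m. f (Suc m)) n)"
  by (rule ext) (simp add: series_const_def series_shift_def)

locale biadditive_family =
  fixes \<mu> :: "nat \<Rightarrow> 'a::ab_group_add \<Rightarrow> 'a \<Rightarrow> 'a"
  assumes add_left: "\<mu> k (u + u') v = \<mu> k u v + \<mu> k u' v"
    and add_right: "\<mu> k u (v + v') = \<mu> k u v + \<mu> k u v'"
begin

lemma zero_left [simp]: "\<mu> k 0 v = 0"
  using add_left[of k 0 0 v] by simp

lemma zero_right [simp]: "\<mu> k u 0 = 0"
  using add_right[of k u 0 0] by simp

definition series_prod :: "(nat \<Rightarrow> 'a) \<Rightarrow> (nat \<Rightarrow> 'a) \<Rightarrow> nat \<Rightarrow> 'a" where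
  "series_prod f g = (\<lambda>n. \<Sum>k\<le>n. \<Sum>i\<le>n - k. \<mu> k (f i) (g (n - k - i)))"

lemma series_prod_add_left:
  "series_prod (\<lambda>n. f n + f' n) g = (\<lambda>n. series_prod f g n + series_prod f' g n)"
  unfolding series_prod_def by (simp add: add_left sum.distrib)

lemma series_prod_add_right:
  "series_prod f (\<lambda>n. g n + g' n) = (\<lambda>n. series_prod f g n + series_prod f g' n)"
  unfolding series_prod_def by (simp add: add_right sum.distrib)

lemma series_prod_shift_left: "series_prod (series_shift f) g = series_shift (series_prod f g)"
proof (rule ext)
  fix n show "series_prod (series_shift f) g n = series_shift (series_prod f g) n"
  proof (cases n)
    case (Suc m)
    have "(\<Sum>i\<le>Suc m - k. \<mu> k (series_shift f i) (g (Suc m - k - i)))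
        = (\<Sum>i\<le>m - k. \<mu> k (f i) (g (m - k - i)))" if "k \<le> m" for k
    proof -
      have Suc_diff: "Suc m - k = Suc (m - k)" using that by simp
      show ?thesis
        unfolding Suc_diff sum.atMost_Suc_shift by (simp add: series_shift_def)
    qed
    then have "series_prod (series_shift f) g (Suc m)
        = (\<Sum>k\<le>m. \<Sum>i\<le>m - k. \<mu> k (f i) (g (m - k - i)))"
      unfolding series_prod_def by (simp add: series_shift_def)
    then show ?thesis
      using Suc by (simp add: series_prod_def series_shift_def)
  qed (simp add: series_prod_def series_shift_def)
qed

lemma series_prod_shift_right: "series_prod f (series_shift g) = series_shift (series_prod f g)"
proof (rule ext)
  fix n show "series_prod f (series_shift g) n = series_shift (series_prod f g) n"
  proof (cases n)
    case (Suc m)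
    have "(\<Sum>i\<le>Suc m - k. \<mu> k (f i) (series_shift g (Suc m - k - i)))
        = (\<Sum>i\<le>m - k. \<mu> k (f i) (g (m - k - i)))" if "k \<le> m" for k
    proof -
      have Suc_diff: "Suc m - k = Suc (m - k)" using that by simp
      have "(\<Sum>i\<le>m - k. \<mu> k (f i) (series_shift g (Suc (m - k) - i)))
          = (\<Sum>i\<le>m - k. \<mu> k (f i) (g (m - k - i)))"
        by (rule sum.cong[OF refl]) (simp add: series_shift_def Suc_diff_le)
      then show ?thesis
        unfolding Suc_diff sum.atMost_Suc by (simp add: series_shift_def)
    qed
    then show ?thesis
      using Suc by (simp add: series_prod_def series_shift_def)
  qed (simp add: series_prod_def series_shift_def)
qed

lemma series_prod_const_left: "series_prod (series_const a) g n = (\<Sum>k\<le>n. \<mu> k a (g (n - k)))"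
proof -
  have "\<mu> k (series_const a i) v = (if i = 0 then \<mu> k a v else 0)" for k i v
    by (simp add: series_const_def)
  then show ?thesis unfolding series_prod_def by simp
qed

lemma series_prod_const_right: "series_prod f (series_const b) n = (\<Sum>k\<le>n. \<mu> k (f (n - k)) b)"
proof -
  have "(\<Sum>i\<le>n - k. \<mu> k (f i) (series_const b (n - k - i))) = \<mu> k (f (n - k)) b" for k
  proof -
    have "(\<Sum>i\<le>n - k. \<mu> k (f i) (series_const b (n - k - i)))
        = (\<Sum>i\<le>n - k. if i = n - k then \<mu> k (f i) b else 0)"
      by (rule sum.cong) (auto simp: series_const_def)
    then show ?thesis by simp
  qed
  then show ?thesis unfolding series_prod_def by simp
qed

lemma series_prod_const_const: "series_prod (series_const a) (series_const b) n = \<mu> n a b"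
proof -
  have "(\<Sum>k\<le>n. \<mu> k a (series_const b (n - k))) = (\<Sum>k\<le>n. if k = n then \<mu> k a b else 0)"
    by (rule sum.cong) (auto simp: series_const_def)
  then show ?thesis unfolding series_prod_const_left by simp
qed

text \<open>Associativity of the series product only has to be checked on constant series,
  i.e. degree by degree on elements; induction on the degree handles the remaining summands,
  which are multiples of \<open>\<hbar>\<close>.\<close>

lemma series_prod_assoc:
  assumes assoc: "\<And>N a b c. (\<Sum>k\<le>N. \<mu> k (\<mu> (N - k) a b) c) = (\<Sum>k\<le>N. \<mu> k a (\<mu> (N - k) b c))"
  shows "series_prod (series_prod f g) h = series_prod f (series_prod g h)"
proof -
  have "series_prod (series_prod f g) h n = series_prod f (series_prod g h) n" for f g h n
  proof (induction n arbitrary: f g h rule: less_induct)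
    case (less n)
    have IH: "series_shift (series_prod (series_prod f g) h) n = series_shift (series_prod f (series_prod g h)) n"
      for f g h
      using less[of "n - 1"] by (cases "n = 0") (simp_all add: series_shift_def)
    have const3: "series_prod (series_prod (series_const a) (series_const b)) (series_const c) n
        = series_prod (series_const a) (series_prod (series_const b) (series_const c)) n" for a b c
      by (simp only: series_prod_const_right[of "series_prod _ _"]
          series_prod_const_left[of a] series_prod_const_const assoc)
    have const2: "series_prod (series_prod (series_const a) (series_const b)) h n
        = series_prod (series_const a) (series_prod (series_const b) h) n" for a b h
      by (subst (1 2) series_const_plus_shift[of h])
        (simp add: series_prod_add_right series_prod_shift_right const3 IH)
    have const1: "series_prod (series_prod (series_const a) g) h n
        = series_prod (series_const a) (series_prod g h) n" for a g h
      by (subst (1 2) series_const_plus_shift[of g])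
        (simp add: series_prod_add_left series_prod_add_right series_prod_shift_left
          series_prod_shift_right const2 IH)
    show ?case
      by (subst (1 2) series_const_plus_shift[of f])
        (simp add: series_prod_add_left series_prod_shift_left const1 IH)
  qed
  then show ?thesis by (intro ext)
qed

end

lemma sum_triangle_rotate:
  fixes T :: "nat \<Rightarrow> nat \<Rightarrow> nat \<Rightarrow> 'b::comm_monoid_add"
  shows "(\<Sum>k\<le>N. \<Sum>j\<le>k. T (k - j) (N - k) j) = (\<Sum>p\<le>N. \<Sum>i\<le>p. T (N - p) i (p - i))"
proof -
  have "(\<Sum>k\<le>N. \<Sum>j\<le>k. T (k - j) (N - k) j) = (\<Sum>(j, m)\<in>{(i, j). i + j \<le> N}. T m (N - (j + m)) j)"
    unfolding sum.triangle_reindex_eq[of "\<lambda>j m. T m (N - (j + m)) j"]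
    by (intro sum.cong refl) simp
  also have "\<dots> = (\<Sum>(i, j)\<in>{(i, j). i + j \<le> N}. T (N - (i + j)) i j)"
    by (rule sum.reindex_bij_witness[where i="\<lambda>(i, j). (j, N - (i + j))" and j="\<lambda>(j, m). (N - (j + m), j)"])
      auto
  also have "\<dots> = (\<Sum>p\<le>N. \<Sum>i\<le>p. T (N - p) i (p - i))"
    unfolding sum.triangle_reindex_eq[of "\<lambda>i j. T (N - (i + j)) i j"]
    by (intro sum.cong refl) simp
  finally show ?thesis .
qed

context module
begin

lemma module_hom_funpow: "module_hom scale scale T \<Longrightarrow> module_hom scale scale (T ^^ n)"
  by (induct n) (simp_all add: module_hom_id module_hom_compose del: comp_apply)

lemma sum_binomial_Suc:
  fixes A :: "nat \<Rightarrow> nat \<Rightarrow> 'b"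
  shows "(\<Sum>j\<le>k. scale (of_nat (k choose j)) (A (Suc j) (k - j) + A j (Suc k - j)))
       = (\<Sum>j\<le>Suc k. scale (of_nat (Suc k choose j)) (A j (Suc k - j)))"
proof -
  have "(\<Sum>j\<le>k. scale (of_nat (k choose j)) (A j (Suc k - j)))
      = (\<Sum>j\<le>Suc k. scale (of_nat (k choose j)) (A j (Suc k - j)))"
    by (simp add: binomial_eq_0)
  also have "\<dots> = A 0 (Suc k) + (\<Sum>j\<le>k. scale (of_nat (k choose Suc j)) (A (Suc j) (k - j)))"
    by (subst sum.atMost_Suc_shift) simp
  finally have shifted: "(\<Sum>j\<le>k. scale (of_nat (k choose j)) (A j (Suc k - j)))
      = A 0 (Suc k) + (\<Sum>j\<le>k. scale (of_nat (k choose Suc j)) (A (Suc j) (k - j)))" .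
  have "(\<Sum>j\<le>Suc k. scale (of_nat (Suc k choose j)) (A j (Suc k - j)))
     = A 0 (Suc k) + (\<Sum>j\<le>k. scale (of_nat (k choose j) + of_nat (k choose Suc j)) (A (Suc j) (k - j)))"
    by (subst sum.atMost_Suc_shift) simp
  also have "\<dots> = A 0 (Suc k) + (\<Sum>j\<le>k. scale (of_nat (k choose j)) (A (Suc j) (k - j)))
      + (\<Sum>j\<le>k. scale (of_nat (k choose Suc j)) (A (Suc j) (k - j)))"
    by (simp add: scale_left_distrib sum.distrib algebra_simps)
  finally show ?thesis
    using shifted by (simp add: scale_right_distrib sum.distrib algebra_simps)
qed

end

lemma of_nat_mult_ring_inv:
  assumes "contains_rationals TYPE('r::comm_ring_1)" and "n > 0"
  shows "of_nat n * ring_inv (of_nat n :: 'r) = 1"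
proof -
  obtain s :: 'r where s: "of_nat n * s = 1"
    using assms unfolding contains_rationals_def by blast
  have "\<exists>!s. (of_nat n :: 'r) * s = 1"
  proof
    show "of_nat n * s = 1" by (rule s)
  next
    fix s' :: 'r assume "of_nat n * s' = 1"
    then have "s * (of_nat n * s') = s" by simp
    then show "s' = s" using s by (simp add: mult.assoc[symmetric] mult.commute[of s])
  qed
  then show ?thesis unfolding ring_inv_def by (rule theI')
qed

lemma binomial_mult_ring_inv_fact:
  assumes "contains_rationals TYPE('r::comm_ring_1)" and "j \<le> n"
  shows "of_nat (n choose j) * ring_inv (of_nat (fact n) :: 'r)
    = ring_inv (of_nat (fact j)) * ring_inv (of_nat (fact (n - j)))"
proof -
  have inv: "of_nat (fact m) * ring_inv (of_nat (fact m) :: 'r) = 1" for m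
    using of_nat_mult_ring_inv[OF assms(1)] by simp
  let ?i = "\<lambda>m. ring_inv (of_nat (fact m) :: 'r)"
  have fact: "of_nat (fact j) * of_nat (fact (n - j)) * of_nat (n choose j) = (of_nat (fact n) :: 'r)"
    by (metis binomial_fact_lemma[OF assms(2)] of_nat_mult)
  have "of_nat (n choose j) * ?i n
      = (of_nat (n choose j) * ?i n) * (of_nat (fact j) * ?i j) * (of_nat (fact (n - j)) * ?i (n - j))"
    by (simp add: inv)
  also have "\<dots> = (of_nat (fact j) * of_nat (fact (n - j)) * of_nat (n choose j) * ?i n) * (?i j * ?i (n - j))"
    by (simp add: ac_simps)
  also have "\<dots> = ?i j * ?i (n - j)"
    by (simp add: fact inv)
  finally show ?thesis .
qed

section \<open>Derivations of an algebra\<close>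

locale scalar_algebra =
  fixes scale :: "'r::comm_ring_1 \<Rightarrow> 'a::ring \<Rightarrow> 'a"
  assumes assoc_algebra: "assoc_algebra scale"
begin

sublocale module scale
  using assoc_algebra unfolding assoc_algebra_def by blast

lemma scale_mult_left: "scale r a * b = scale r (a * b)"
  using assoc_algebra unfolding assoc_algebra_def by metis

lemma scale_mult_right: "a * scale r b = scale r (a * b)"
  using assoc_algebra unfolding assoc_algebra_def by metis

end

locale algebra_derivation = scalar_algebra scale
  for scale :: "'r::comm_ring_1 \<Rightarrow> 'a::ring \<Rightarrow> 'a" +
  fixes D :: "'a \<Rightarrow> 'a"
  assumes derivation: "derivation scale D"
begin

lemma D_add: "D (a + b) = D a + D b"
  using derivation unfolding derivation_def by blast

lemma D_scale: "D (scale r a) = scale r (D a)"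
  using derivation unfolding derivation_def by blast

lemma D_mult: "D (a * b) = D a * b + a * D b"
  using derivation unfolding derivation_def by blast

lemma module_hom_D: "module_hom scale scale D"
  by (simp add: module_hom_iff module_axioms D_add D_scale)

lemma funpow_mult:
  "(D ^^ k) (x * y) = (\<Sum>j\<le>k. scale (of_nat (k choose j)) ((D ^^ j) x * (D ^^ (k - j)) y))"
proof (induct k arbitrary: x y)
  case (Suc k)
  interpret Dk: module_hom scale scale "D ^^ k"
    by (rule module_hom_funpow[OF module_hom_D])
  have "(D ^^ Suc k) (x * y) = (D ^^ k) (D x * y) + (D ^^ k) (x * D y)"
    by (simp only: funpow_Suc_right comp_apply D_mult Dk.add)
  also have "\<dots> = (\<Sum>j\<le>k. scale (of_nat (k choose j)) ((D ^^ Suc j) x * (D ^^ (k - j)) y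
        + (D ^^ j) x * (D ^^ (Suc k - j)) y))"
    unfolding Suc scale_right_distrib sum.distrib
    by (intro arg_cong2[where f="(+)"] sum.cong refl)
      (simp_all only: funpow_Suc_right comp_apply Suc_diff_le atMost_iff)
  also have "\<dots> = (\<Sum>j\<le>Suc k. scale (of_nat (Suc k choose j)) ((D ^^ j) x * (D ^^ (Suc k - j)) y))"
    by (rule sum_binomial_Suc[where A="\<lambda>j i. (D ^^ j) x * (D ^^ i) y"])
  finally show ?case .
qed simp

fun shifted_falling :: "int \<Rightarrow> nat \<Rightarrow> 'a \<Rightarrow> 'a" where
  "shifted_falling s 0 = id"
| "shifted_falling s (Suc n) = shifted_falling s n \<circ> (\<lambda>a. D a + scale (of_int s - of_nat n) a)"

lemma shifted_falling_zero: "shifted_falling 0 n = falling_op scale D n"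
  by (induct n) (simp_all add: algebra_simps)

lemma module_hom_shift: "module_hom scale scale (\<lambda>a. D a + scale r a)"
  by (simp add: module_hom_iff module_axioms D_add D_scale algebra_simps scale_left_commute)

lemma module_hom_shifted_falling: "module_hom scale scale (shifted_falling s n)"
  by (induct n) (simp_all add: module_hom_ident module_hom_compose[OF module_hom_shift] del: comp_apply)

lemma shifted_falling_shift:
  "shifted_falling s n (D a + scale r a) = D (shifted_falling s n a) + scale r (shifted_falling s n a)"
proof (induct n arbitrary: a)
  case (Suc n)
  let ?c = "of_int s - of_nat n :: 'r"
  have "shifted_falling s (Suc n) (D a + scale r a)
      = shifted_falling s n (D (D a + scale r a) + scale ?c (D a + scale r a))"
    by simp
  also have "\<dots> = shifted_falling s n (D (D a + scale ?c a) + scale r (D a + scale ?c a))"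
    by (simp add: D_add D_scale scale_right_distrib add_ac mult.commute)
  also have "\<dots> = D (shifted_falling s (Suc n) a) + scale r (shifted_falling s (Suc n) a)"
    by (simp only: Suc shifted_falling.simps comp_apply)
  finally show ?case .
qed simp

lemma shifted_falling_commute:
  "shifted_falling s n (shifted_falling t m a) = shifted_falling t m (shifted_falling s n a)"
  by (induct m arbitrary: a) (simp_all add: shifted_falling_shift)

lemma shifted_falling_add:
  "shifted_falling s (m + j) a = shifted_falling s m (shifted_falling (s - int m) j a)"
  by (induct j arbitrary: a) (simp_all add: algebra_simps)

lemma shifted_falling_mult_step:
  assumes "j \<le> k"
  shows "shifted_falling s j (D x) * shifted_falling t (k - j) y
       + shifted_falling s j x * shifted_falling t (k - j) (D y)
       + scale (of_int (s + t) - of_nat k) (shifted_falling s j x * shifted_falling t (k - j) y)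
     = shifted_falling s (Suc j) x * shifted_falling t (k - j) y
       + shifted_falling s j x * shifted_falling t (Suc k - j) y"
proof -
  have D_eq: "shifted_falling u i (D z) = shifted_falling u (Suc i) z - scale (of_int u - of_nat i) (shifted_falling u i z)"
    for u i z
    using module_hom_shifted_falling[of u i] by (simp add: module_hom.add module_hom.scale)
  have sk: "Suc k - j = Suc (k - j)"
    using assms by simp
  have c: "of_int (s + t) - of_nat k = (of_int s - of_nat j) + (of_int t - of_nat (k - j) :: 'r)"
    using assms by (simp add: of_nat_diff)
  show ?thesis
    unfolding D_eq sk c by (simp add: algebra_simps scale_mult_left scale_mult_right)
qed

lemma shifted_falling_mult:
  "shifted_falling (s + t) k (x * y)
    = (\<Sum>j\<le>k. scale (of_nat (k choose j)) (shifted_falling s j x * shifted_falling t (k - j) y))"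
proof (induct k arbitrary: x y)
  case (Suc k)
  interpret F: module_hom scale scale "shifted_falling (s + t) k"
    by (rule module_hom_shifted_falling)
  let ?c = "of_int (s + t) - of_nat k :: 'r"
  have "shifted_falling (s + t) (Suc k) (x * y)
      = shifted_falling (s + t) k (D x * y) + shifted_falling (s + t) k (x * D y)
        + scale ?c (shifted_falling (s + t) k (x * y))"
    by (simp add: D_mult F.add F.scale)
  also have "\<dots> = (\<Sum>j\<le>k. scale (of_nat (k choose j))
        (shifted_falling s j (D x) * shifted_falling t (k - j) y
         + shifted_falling s j x * shifted_falling t (k - j) (D y)
         + scale ?c (shifted_falling s j x * shifted_falling t (k - j) y)))"
    unfolding Suc scale_right_distrib sum.distrib scale_sum_right scale_scale mult.commute[of ?c] ..
  also have "\<dots> = (\<Sum>j\<le>k. scale (of_nat (k choose j))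
        (shifted_falling s (Suc j) x * shifted_falling t (k - j) y
         + shifted_falling s j x * shifted_falling t (Suc k - j) y))"
    by (intro sum.cong refl) (simp add: shifted_falling_mult_step del: shifted_falling.simps of_int_add)
  also have "\<dots> = (\<Sum>j\<le>Suc k. scale (of_nat (Suc k choose j))
        (shifted_falling s j x * shifted_falling t (Suc k - j) y))"
    by (rule sum_binomial_Suc[where A="\<lambda>j i. shifted_falling s j x * shifted_falling t i y"])
  finally show ?case .
qed simp

end

section \<open>Two derivations with \<open>[D\<^sub>1, D\<^sub>2] = D\<^sub>1\<close>\<close>

locale derivation_pair =
  scalar_algebra scale + D1: algebra_derivation scale D1 + D2: algebra_derivation scale D2
  for scale :: "'r::comm_ring_1 \<Rightarrow> 'a::ring \<Rightarrow> 'a" and D1 D2 :: "'a \<Rightarrow> 'a" +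
  assumes rationals: "contains_rationals TYPE('r)"
    and commutator: "\<And>a. D1 (D2 a) - D2 (D1 a) = D1 a"
begin

lemma D1_shift: "D1 (D2 a + scale r a) = D2 (D1 a) + scale (r + 1) (D1 a)"
proof -
  have "D1 (D2 a) = D2 (D1 a) + D1 a"
    using commutator[of a] by (simp add: algebra_simps)
  then show ?thesis
    by (simp add: D1.D_add D1.D_scale scale_left_distrib add.assoc)
qed

lemma D1_shifted_falling: "D1 (D2.shifted_falling s n a) = D2.shifted_falling (s + 1) n (D1 a)"
  by (induct n arbitrary: a) (simp_all add: D1_shift diff_add_eq)

lemma funpow_D1_shifted_falling:
  "(D1 ^^ m) (D2.shifted_falling s n a) = D2.shifted_falling (s + int m) n ((D1 ^^ m) a)"
  by (induct m arbitrary: a) (simp_all add: D1_shifted_falling algebra_simps)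

definition binomial_op :: "int \<Rightarrow> nat \<Rightarrow> 'a \<Rightarrow> 'a" where
  "binomial_op s n a = scale (ring_inv (of_nat (fact n))) (D2.shifted_falling s n a)"

lemma module_hom_binomial_op: "module_hom scale scale (binomial_op s n)"
  unfolding binomial_op_def
  by (rule module_hom_compose[OF D2.module_hom_shifted_falling module_hom_scale_self, unfolded o_def])

lemma funpow_D1_binomial_op:
  "(D1 ^^ m) (binomial_op s n a) = binomial_op (s + int m) n ((D1 ^^ m) a)"
proof -
  interpret D1m: module_hom scale scale "D1 ^^ m"
    by (rule module_hom_funpow[OF D1.module_hom_D])
  show ?thesis
    unfolding binomial_op_def by (simp add: D1m.scale funpow_D1_shifted_falling)
qed

lemma binomial_op_compose:
  "scale (of_nat ((j + m) choose j)) (binomial_op 0 (j + m) c) = binomial_op (- int m) j (binomial_op 0 m c)"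
proof -
  interpret F: module_hom scale scale "D2.shifted_falling (- int m) j"
    by (rule D2.module_hom_shifted_falling)
  have "D2.shifted_falling (- int m) j (D2.shifted_falling 0 m c) = D2.shifted_falling 0 (j + m) c"
    using D2.shifted_falling_add[of 0 m j c] by (simp add: D2.shifted_falling_commute add.commute)
  then show ?thesis
    unfolding binomial_op_def
    using binomial_mult_ring_inv_fact[OF rationals, of j "j + m"] by (simp add: F.scale)
qed

lemma binomial_op_mult: "binomial_op (s + t) k (x * y) = (\<Sum>j\<le>k. binomial_op s j x * binomial_op t (k - j) y)"
proof -
  have "binomial_op (s + t) k (x * y) = (\<Sum>j\<le>k. scale (ring_inv (of_nat (fact k)) * of_nat (k choose j))
      (D2.shifted_falling s j x * D2.shifted_falling t (k - j) y))"
    unfolding binomial_op_def D2.shifted_falling_mult scale_sum_right by simp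
  also have "\<dots> = (\<Sum>j\<le>k. binomial_op s j x * binomial_op t (k - j) y)"
  proof (intro sum.cong refl)
    fix j assume "j \<in> {..k}"
    then show "scale (ring_inv (of_nat (fact k)) * of_nat (k choose j))
        (D2.shifted_falling s j x * D2.shifted_falling t (k - j) y)
      = binomial_op s j x * binomial_op t (k - j) y"
      using binomial_mult_ring_inv_fact[OF rationals, of j k]
      by (simp add: binomial_op_def mult.commute scale_mult_left scale_mult_right)
  qed
  finally show ?thesis .
qed

text \<open>\<open>star_term k a b = D\<^sub>1\<^sup>k(a) [D\<^sub>2]\<^sub>k(b) / k!\<close> is the coefficient of \<open>\<hbar>\<^sup>k\<close> in \<open>a \<star> b\<close>.\<close>

definition star_term :: "nat \<Rightarrow> 'a \<Rightarrow> 'a \<Rightarrow> 'a" where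
  "star_term k a b = (D1 ^^ k) a * binomial_op 0 k b"

sublocale star: biadditive_family star_term
proof
  fix k u u' v
  interpret D1k: module_hom scale scale "D1 ^^ k"
    by (rule module_hom_funpow[OF D1.module_hom_D])
  interpret B: module_hom scale scale "binomial_op 0 k"
    by (rule module_hom_binomial_op)
  show "star_term k (u + u') v = star_term k u v + star_term k u' v"
    unfolding star_term_def by (simp add: D1k.add distrib_right)
  show "star_term k v (u + u') = star_term k v u + star_term k v u'"
    unfolding star_term_def by (simp add: B.add distrib_left)
qed

lemma star_prod_eq_series_prod: "star_prod scale D1 D2 f g = star.series_prod f g"
  unfolding star_prod_def star.series_prod_def star_term_def binomial_op_def
  by (simp add: scale_mult_right D2.shifted_falling_zero)

lemma star_term_star_term_left:
  "star_term k (star_term l a b) c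
    = (\<Sum>j\<le>k. (D1 ^^ (j + l)) a
        * (binomial_op (int (k - j)) l ((D1 ^^ (k - j)) b)
           * binomial_op (- int (k - j)) j (binomial_op 0 (k - j) c)))"
proof -
  have "star_term k (star_term l a b) c = (\<Sum>j\<le>k. scale (of_nat (k choose j))
      ((D1 ^^ j) ((D1 ^^ l) a) * (D1 ^^ (k - j)) (binomial_op 0 l b)) * binomial_op 0 k c)"
    unfolding star_term_def D1.funpow_mult sum_distrib_right ..
  also have "\<dots> = (\<Sum>j\<le>k. (D1 ^^ (j + l)) a
        * (binomial_op (int (k - j)) l ((D1 ^^ (k - j)) b)
           * binomial_op (- int (k - j)) j (binomial_op 0 (k - j) c)))"
  proof (intro sum.cong refl)
    fix j assume "j \<in> {..k}"
    then have "scale (of_nat (k choose j)) (binomial_op 0 k c)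
        = binomial_op (- int (k - j)) j (binomial_op 0 (k - j) c)"
      using binomial_op_compose[of j "k - j" c] by simp
    then show "scale (of_nat (k choose j)) ((D1 ^^ j) ((D1 ^^ l) a)
          * (D1 ^^ (k - j)) (binomial_op 0 l b)) * binomial_op 0 k c
        = (D1 ^^ (j + l)) a * (binomial_op (int (k - j)) l ((D1 ^^ (k - j)) b)
          * binomial_op (- int (k - j)) j (binomial_op 0 (k - j) c))"
      by (simp add: funpow_D1_binomial_op funpow_add scale_mult_left scale_mult_right[symmetric] mult.assoc)
  qed
  finally show ?thesis .
qed

lemma star_term_star_term_right:
  "star_term p a (star_term l b c)
    = (\<Sum>i\<le>p. (D1 ^^ (p - i + i)) a
        * (binomial_op (int l) i ((D1 ^^ l) b) * binomial_op (- int l) (p - i) (binomial_op 0 l c)))"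
proof -
  have "star_term p a (star_term l b c)
      = (D1 ^^ p) a * binomial_op (int l + - int l) p ((D1 ^^ l) b * binomial_op 0 l c)"
    unfolding star_term_def by simp
  then show ?thesis
    unfolding binomial_op_mult sum_distrib_left by simp
qed

lemma star_term_assoc:
  "(\<Sum>k\<le>N. star_term k (star_term (N - k) a b) c) = (\<Sum>k\<le>N. star_term k a (star_term (N - k) b c))"
  unfolding star_term_star_term_left star_term_star_term_right
  by (rule sum_triangle_rotate[where T="\<lambda>m l j. (D1 ^^ (j + l)) a
      * (binomial_op (int m) l ((D1 ^^ m) b) * binomial_op (- int m) j (binomial_op 0 m c))"])

lemma star_prod_assoc:
  "star_prod scale D1 D2 (star_prod scale D1 D2 f g) h = star_prod scale D1 D2 f (star_prod scale D1 D2 g h)"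
  unfolding star_prod_eq_series_prod by (rule star.series_prod_assoc[OF star_term_assoc])

end

theorem theorem5:
  fixes scale :: "'r::comm_ring_1 \<Rightarrow> 'a::ring \<Rightarrow> 'a"
    and D1 D2 :: "'a \<Rightarrow> 'a"
  assumes "assoc_algebra scale"
    and "contains_rationals TYPE('r)"
    and "derivation scale D1" and "derivation scale D2"
    and "\<forall>a. D1 (D2 a) - D2 (D1 a) = D1 a"
  shows "\<forall>f g h :: nat \<Rightarrow> 'a.
     star_prod scale D1 D2 (star_prod scale D1 D2 f g) h
       = star_prod scale D1 D2 f (star_prod scale D1 D2 g h)"
proof -
  interpret derivation_pair scale D1 D2
    using assms by unfold_locales (simp_all add: scalar_algebra_def)
  show ?thesis
    using star_prod_assoc by blast
qed

end
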